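(* There is a positive absolute constant $k_4$ such that for every integer $c\ge 3$, written as $c=q_1^{a_1}\cdots q_\omega^{a_\omega}$ with $q_i$ distinct primes and $a_i\ge 1$, $$G_c^{2/\varphi(c)}>k_4\prod_{i=1}^{\omega} q_i^{\,2a_i-1-\frac{2}{\varphi(c)}E_c(q_i)}\left(\frac{q_i-1}{2}\right)^2.$$
   Context: For a positive integer $n$, $R(n)$ denotes the product of the distinct primes dividing $n$. $\varphi$ is Euler's totient function. For $c\ge3$, $G_c$ is the product of $R(abc)$ over all pairs of positive integers $(a,b)$ with $a+b=c$, $a<b$, $\gcd(a,b)=1$ (there are $\varphi(c)/2$ such pairs), so $G_c^{2/\varphi(c)}$ is the geometric mean of these radicals. For $c$ with distinct prime factors $q_1,\dots,q_\omega$ and real $x\ne0$, $E_c(x)=\sum_{S\subseteq\{1,\dots,\omega\}}(-1)^{|S|}\lfloor c/(x\prod_{j\in S}q_j)\rfloor$. *)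

theory Defs
  imports "HOL-Number_Theory.Number_Theory"
begin

definition rad :: "nat \<Rightarrow> nat" where
  "rad n = (\<Prod>p\<in>prime_factors n. p)"

definition Gc :: "nat \<Rightarrow> nat" where
  "Gc c = (\<Prod>a\<in>{a. 0 < a \<and> a < c - a \<and> coprime a (c - a)}. rad (a * (c - a) * c))"

definition Ec :: "nat \<Rightarrow> real \<Rightarrow> int" where
  "Ec c x = (\<Sum>S\<in>Pow (prime_factors c).
      (-1) ^ card S * \<lfloor>real c / (x * real (\<Prod>q\<in>S. q))\<rfloor>)"

end

theory Submission
  imports Defs
begin

text \<open>Since E_c(q) counts the integers up to c/q that are coprime to c, it is
nonnegative, so the right-hand side is at most phi(c)^2 R(c) 4^(-omega).
The involution a -> c - a on the totatives of c gives G_c^2 = R(c)^phi(c) (prod_a R(a))^2.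
Every a has a square divisor s^2 with a <= s^2 R(a), whence sum_(a<=c) log (a / R(a)) <= 8c;
together with prod_a a >= phi(c)! this yields G_c^(2/phi(c)) >= R(c) phi(c)^2 exp(-2 - 16c/phi(c)).
Finally (c/phi(c))^2 <= 8 omega, so 16c/phi(c) <= omega + 512, and 4^(-omega) <= e^(-omega)
absorbs the loss: k_4 = e^(-515) works.\<close>

section \<open>Radicals\<close>

lemma coprime_iff_prime_factors_disjoint:
  fixes m c :: nat
  assumes "m > 0" "c > 0"
  shows "coprime m c \<longleftrightarrow> prime_factors m \<inter> prime_factors c = {}"
proof
  assume "coprime m c"
  then show "prime_factors m \<inter> prime_factors c = {}"
    by (auto simp: in_prime_factors_iff dest: coprime_common_divisor_nat prime_gt_1_nat)
next
  assume disjoint: "prime_factors m \<inter> prime_factors c = {}"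
  show "coprime m c"
  proof (rule ccontr)
    assume "\<not> coprime m c"
    then have "gcd m c \<noteq> 1" by (simp only: coprime_iff_gcd_eq_1 not_False_eq_True)
    then obtain p where "prime p" "p dvd gcd m c"
      using prime_factor_nat by blast
    then have "p \<in> prime_factors m \<inter> prime_factors c"
      using assms by (auto simp: in_prime_factors_iff)
    with disjoint show False by blast
  qed
qed

lemma rad_pos: "rad n > 0"
  unfolding rad_def by (intro prod_pos) (auto intro: prime_gt_0_nat)

lemma rad_dvd_self: "rad n dvd n"
proof (cases "n = 0")
  case False
  have "rad n dvd (\<Prod>p\<in>prime_factors n. p ^ multiplicity p n)"
    unfolding rad_def by (intro prod_dvd_prod dvd_power) (auto simp: prime_factors_multiplicity)
  also have "\<dots> = n" using False by (simp add: prod_prime_factors)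
  finally show ?thesis .
qed simp

lemma rad_le_self: "n > 0 \<Longrightarrow> rad n \<le> n"
  by (intro dvd_imp_le rad_dvd_self)

lemma rad_mult_coprime:
  assumes "coprime x y" "x > 0" "y > 0"
  shows "rad (x * y) = rad x * rad y"
  using assms coprime_iff_prime_factors_disjoint[of x y]
  by (simp add: rad_def prime_factors_product prod.union_disjoint)

lemma prod_subset_prime_factors_dvd:
  fixes n :: nat
  assumes "S \<subseteq> prime_factors n"
  shows "\<Prod>S dvd n"
proof -
  have "\<Prod>S dvd rad n"
    unfolding rad_def using assms by (intro prod_dvd_prod_subset) simp_all
  then show ?thesis using rad_dvd_self dvd_trans by blast
qed

lemma square_part_rad:
  fixes n :: nat
  assumes "n > 0"
  obtains s where "s^2 dvd n" "n \<le> s^2 * rad n"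
proof
  let ?P = "prime_factors n" and ?m = "\<lambda>p. multiplicity p n"
  define s where "s = (\<Prod>p\<in>?P. p ^ (?m p div 2))"
  have "n = (\<Prod>p\<in>?P. p ^ ?m p)"
    using assms by (simp add: prod_prime_factors)
  also have "\<dots> = (\<Prod>p\<in>?P. (p ^ (?m p div 2))^2 * p ^ (?m p mod 2))"
    by (intro prod.cong refl) (simp flip: power_mult power_add)
  also have "\<dots> = s^2 * (\<Prod>p\<in>?P. p ^ (?m p mod 2))"
    by (simp add: s_def prod.distrib prod_power_distrib)
  finally have n: "n = s^2 * (\<Prod>p\<in>?P. p ^ (?m p mod 2))" .
  then show "s^2 dvd n" by (metis dvd_triv_left)
  have "(\<Prod>p\<in>?P. p ^ (?m p mod 2)) \<le> rad n"
    unfolding rad_def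
    by (intro prod_mono) (auto simp: mod_2_eq_odd prime_factors_multiplicity Suc_le_eq prime_gt_0_nat)
  then show "n \<le> s^2 * rad n" by (subst n) simp
qed

section \<open>Sums of log (a / R(a))\<close>

lemma card_multiples_atLeastAtMost:
  fixes d :: nat
  assumes "d > 0"
  shows "card {a\<in>{1..n}. d dvd a} = n div d"
proof -
  have "{a\<in>{1..n}. d dvd a} = (\<lambda>k. d * k) ` {1..n div d}"
    using assms by (auto simp: less_eq_div_iff_mult_less_eq mult.commute elim!: dvdE)
  also have "card \<dots> = n div d"
    using assms by (subst card_image) (auto simp: inj_on_def)
  finally show ?thesis .
qed

lemma ln_div_square_le_telescope:
  fixes x :: real
  assumes "x \<ge> 1"
  shows "ln (x + 1) / (x + 1)^2 \<le> 4 / sqrt x - 4 / sqrt (x + 1)"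
proof -
  define a b where "a = sqrt x" and "b = sqrt (x + 1)"
  have ab: "0 < a" "a \<le> b" "a^2 = x" "b^2 = x + 1"
    using assms by (auto simp: a_def b_def)
  have "ln (x + 1) = 2 * ln b"
    using assms by (simp add: b_def ln_sqrt)
  also have "\<dots> \<le> 2 * b"
    using ln_le_minus_one[of b] ab by simp
  moreover have "(x + 1)^2 = b^4"
    by (simp flip: ab(4) power_mult)
  ultimately have "ln (x + 1) / (x + 1)^2 \<le> 2 * b / b^4"
    by (simp add: divide_right_mono)
  also have "\<dots> = 4 / (2 * b^3)"
    using ab by (simp add: power_eq_if)
  also have "\<dots> \<le> 4 / (a * b * (a + b))"
  proof (rule divide_left_mono)
    have "a * b * (a + b) \<le> b * b * (b + b)"
      using ab by (intro mult_mono) auto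
    then show "a * b * (a + b) \<le> 2 * b^3"
      by (simp add: power3_eq_cube)
  qed (use ab in auto)
  also have "\<dots> = 4 / a - 4 / b"
  proof -
    have pos: "a > 0" "b > 0" using ab by auto
    have "4 / a - 4 / b = 4 * (b - a) / (a * b)"
      using pos by (simp add: field_simps)
    also have "\<dots> = 4 * ((b - a) * (a + b)) / (a * b * (a + b))"
      using pos by (simp only: mult.assoc[symmetric] mult_divide_mult_cancel_right)
    also have "(b - a) * (a + b) = 1"
      using ab by (simp add: algebra_simps power2_eq_square)
    finally show ?thesis by simp
  qed
  finally show ?thesis by (simp add: a_def b_def)
qed

lemma sum_ln_div_square_le:
  "(\<Sum>t\<in>{1..n}. ln (real t) / real t ^ 2) \<le> 4"
proof (cases "n = 0")
  case False
  have telescope: "(\<Sum>t\<in>{1..m}. ln (real t) / real t ^ 2) \<le> 4 - 4 / sqrt (real m)"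
    if "m \<ge> 1" for m
    using that
  proof (induction m rule: dec_induct)
    case (step m)
    then show ?case
      using ln_div_square_le_telescope[of "real m"] by (simp add: add.commute)
  qed simp
  have "4 / sqrt (real n) \<ge> 0" by simp
  then show ?thesis
    using telescope[of n] False by linarith
qed simp

lemma ln_sub_ln_rad_le:
  assumes "a \<in> {1..n}"
  shows "ln (real a) - ln (real (rad a)) \<le> 2 * (\<Sum>t\<in>{t\<in>{1..n}. t^2 dvd a}. ln (real t))"
proof -
  obtain s where s: "s^2 dvd a" "a \<le> s^2 * rad a"
    using assms square_part_rad[of a] by auto
  have "s > 0" "s \<le> a"
    using s(1) assms dvd_imp_le[of "s^2" a] power2_nat_le_imp_le[of s a] by (auto intro: gr0I)
  have "ln (real a) \<le> ln (real s ^ 2 * real (rad a))"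
    using s(2) assms \<open>s > 0\<close> rad_pos[of a]
    by (subst ln_le_cancel_iff) (auto simp flip: of_nat_power of_nat_mult)
  also have "\<dots> = 2 * ln (real s) + ln (real (rad a))"
    using \<open>s > 0\<close> rad_pos[of a] by (simp add: ln_mult ln_realpow)
  also have "ln (real s) \<le> (\<Sum>t\<in>{t\<in>{1..n}. t^2 dvd a}. ln (real t))"
    using \<open>s > 0\<close> \<open>s \<le> a\<close> s(1) assms
    by (intro member_le_sum) (auto intro: ln_ge_zero)
  finally show ?thesis by simp
qed

lemma sum_ln_sub_ln_rad_le:
  "(\<Sum>a\<in>{1..n}. ln (real a) - ln (real (rad a))) \<le> 8 * real n"
proof -
  have "(\<Sum>a\<in>{1..n}. ln (real a) - ln (real (rad a)))
      \<le> (\<Sum>a\<in>{1..n}. 2 * (\<Sum>t\<in>{t\<in>{1..n}. t^2 dvd a}. ln (real t)))"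
    by (intro sum_mono ln_sub_ln_rad_le)
  also have "\<dots> = 2 * (\<Sum>a\<in>{1..n}. \<Sum>t\<in>{t\<in>{1..n}. t^2 dvd a}. ln (real t))"
    by (simp only: sum_distrib_left)
  also have "(\<Sum>a\<in>{1..n}. \<Sum>t\<in>{t\<in>{1..n}. t^2 dvd a}. ln (real t))
      = (\<Sum>t\<in>{1..n}. \<Sum>a\<in>{a\<in>{1..n}. t^2 dvd a}. ln (real t))"
    by (simp only: sum.inter_filter finite_atLeastAtMost) (rule sum.swap)
  also have "\<dots> = (\<Sum>t\<in>{1..n}. ln (real t) * real (n div t^2))"
    using card_multiples_atLeastAtMost[of "_^2" n] by (intro sum.cong refl) simp
  also have "\<dots> \<le> (\<Sum>t\<in>{1..n}. ln (real t) * (real n / real t ^ 2))"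
    by (intro sum_mono mult_left_mono) (auto simp flip: of_nat_power intro: of_nat_div_le_of_nat)
  also have "\<dots> = real n * (\<Sum>t\<in>{1..n}. ln (real t) / real t ^ 2)"
    by (simp only: sum_distrib_left times_divide_eq_right mult.commute)
  also have "\<dots> \<le> real n * 4"
    by (intro mult_left_mono sum_ln_div_square_le) simp
  finally show ?thesis by simp
qed

lemma power_div_fact_le_exp:
  fixes x :: real
  assumes "x \<ge> 0"
  shows "x ^ n / fact n \<le> exp x"
proof -
  have "(\<lambda>k. x ^ k / fact k) sums exp x"
    using exp_converges[of x] by (simp add: divide_inverse mult.commute scaleR_conv_of_real)
  then show ?thesis
    using sum_le_suminf[of "\<lambda>k. x ^ k / fact k" "{n}"] assms by (simp add: sums_iff)
qed

lemma ln_fact_ge: "real n * ln (real n) - real n \<le> ln (fact n)"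
proof (cases "n = 0")
  case False
  have "real n ^ n \<le> exp (real n) * fact n"
    using power_div_fact_le_exp[of "real n" n] by (simp add: divide_le_eq)
  then have "ln (real n ^ n) \<le> ln (exp (real n) * fact n)"
    using False by (subst ln_le_cancel_iff) auto
  then show ?thesis
    using False by (simp add: ln_mult ln_realpow)
qed simp

lemma fact_card_le_prod:
  fixes S :: "nat set"
  assumes "finite S" "0 \<notin> S"
  shows "fact (card S) \<le> \<Prod>S"
  using assms
proof (induction "card S" arbitrary: S)
  case (Suc n)
  define m where "m = Max S"
  have "S \<noteq> {}" using Suc.hyps(2) by auto
  then have "m \<in> S" using Suc.prems(1) by (simp add: m_def)
  have "S \<subseteq> {1..m}"
    using Suc.prems by (auto simp: m_def Suc_le_eq intro: gr0I)
  then have "card S \<le> m"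
    using card_mono[of "{1..m}" S] by simp
  have "fact (card S) = card S * fact (card (S - {m}))"
    using Suc.hyps(2) Suc.prems(1) \<open>m \<in> S\<close> by (simp flip: Suc.hyps(2))
  also have "\<dots> \<le> m * \<Prod>(S - {m})"
    using Suc \<open>m \<in> S\<close> \<open>card S \<le> m\<close> by (intro mult_le_mono Suc.hyps(1)) auto
  also have "\<dots> = \<Prod>S"
    using Suc.prems(1) \<open>m \<in> S\<close> by (simp add: prod.remove)
  finally show ?case .
qed simp

section \<open>The ratio c / phi(c)\<close>

lemma card_primes_le:
  assumes "\<forall>q\<in>S. prime q \<and> q \<le> m"
  shows "2 * card S \<le> m + 1"
proof (cases "S = {}")
  case False
  then obtain p where "p \<in> S" by blast
  then have "m \<ge> 2" using assms prime_ge_2_nat[of p] by auto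
  have "S \<subseteq> insert 2 ((\<lambda>i. 2 * i + 1) ` {1..(m - 1) div 2})"
  proof
    fix q assume "q \<in> S"
    then have "prime q" "q \<le> m" using assms by auto
    show "q \<in> insert 2 ((\<lambda>i. 2 * i + 1) ` {1..(m - 1) div 2})"
    proof (cases "q = 2")
      case False
      then have "odd q"
        using \<open>prime q\<close> prime_ge_2_nat[of q] by (intro prime_odd_nat) auto
      then obtain i where i: "q = 2 * i + 1" by (rule oddE)
      then have "i \<in> {1..(m - 1) div 2}"
        using \<open>prime q\<close> \<open>q \<le> m\<close> by (cases "i = 0") auto
      then show ?thesis using i by blast
    qed simp
  qed
  then have "card S \<le> card (insert 2 ((\<lambda>i. 2 * i + 1) ` {1..(m - 1) div 2}))"
    by (intro card_mono) auto
  also have "\<dots> \<le> 1 + (m - 1) div 2"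
    using card_image_le[of "{1..(m - 1) div 2}" "\<lambda>i. 2 * i + 1"]
    by (intro card_insert_le_m1) auto
  finally show ?thesis using \<open>m \<ge> 2\<close> by linarith
qed simp

lemma prime_ratio_le_two:
  assumes "prime (p::nat)"
  shows "0 \<le> real p / (real p - 1)" "real p / (real p - 1) \<le> 2"
  using prime_ge_2_nat[OF assms] by (simp_all add: field_simps)

text \<open>Peeling off the largest prime \<open>m \<ge> 2k + 1\<close> multiplies the bound by at most
\<open>((2k + 1) / (2k))\<^sup>2\<close>, and \<open>((2k + 1) / (2k))\<^sup>2 (2k - 1) \<le> 2k + 1\<close>.\<close>

lemma prod_prime_ratio_square_le:
  fixes S :: "nat set"
  assumes "finite S" "S \<noteq> {}" "\<forall>q\<in>S. prime q"
  shows "(\<Prod>q\<in>S. real q / (real q - 1))^2 \<le> 4 * (2 * real (card S) - 1)"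
  using assms
proof (induction "card S" arbitrary: S rule: less_induct)
  case less
  define m where "m = Max S"
  have "m \<in> S" using less.prems by (simp add: m_def)
  have prod_S: "(\<Prod>q\<in>S. real q / (real q - 1))
      = real m / (real m - 1) * (\<Prod>q\<in>S - {m}. real q / (real q - 1))"
    using less.prems(1) \<open>m \<in> S\<close> by (rule prod.remove)
  show ?case
  proof (cases "S = {m}")
    case True
    then show ?thesis
      using prime_ratio_le_two[of m] less.prems(3) power_mono[of "real m / (real m - 1)" 2 2] by simp
  next
    case False
    define k where "k = card (S - {m})"
    have "S - {m} \<noteq> {}" using False \<open>m \<in> S\<close> by auto
    then have "k \<ge> 1" using less.prems(1) by (simp add: k_def Suc_le_eq card_gt_0_iff)
    have "card S = k + 1"
      using card.remove[OF less.prems(1) \<open>m \<in> S\<close>] by (simp add: k_def)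
    have "2 * card S \<le> m + 1"
      using less.prems by (intro card_primes_le) (auto simp: m_def)
    then have "real m / (real m - 1) \<le> (2 * real k + 1) / (2 * real k)"
      using \<open>card S = k + 1\<close> \<open>k \<ge> 1\<close> by (simp add: field_simps)
    have IH: "(\<Prod>q\<in>S - {m}. real q / (real q - 1))^2 \<le> 4 * (2 * real k - 1)"
      unfolding k_def using less.prems \<open>S - {m} \<noteq> {}\<close> \<open>card S = k + 1\<close>
      by (intro less.hyps) (auto simp: k_def)
    have "(\<Prod>q\<in>S. real q / (real q - 1))^2
        \<le> ((2 * real k + 1) / (2 * real k))^2 * (4 * (2 * real k - 1))"
      unfolding prod_S power_mult_distrib
      using prime_ratio_le_two[of m] less.prems(3) \<open>m \<in> S\<close>
      by (intro mult_mono power_mono IH \<open>real m / (real m - 1) \<le> _\<close>) auto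
    also have "\<dots> = 4 * (2 * real k + 1) * ((2 * real k + 1) * (2 * real k - 1) / (2 * real k)^2)"
      using \<open>k \<ge> 1\<close> by (simp add: power2_eq_square field_simps)
    also have "\<dots> \<le> 4 * (2 * real k + 1)"
      using \<open>k \<ge> 1\<close> by (intro mult_left_le) (simp_all add: field_simps power2_eq_square)
    finally show ?thesis using \<open>card S = k + 1\<close> by simp
  qed
qed

lemma real_div_totient_eq_prod:
  assumes "c > 0"
  shows "real c / real (totient c) = (\<Prod>p\<in>prime_factors c. real p / (real p - 1))"
proof -
  define P Q where "P = (\<Prod>p\<in>prime_factors c. 1 - 1 / real p)"
    and "Q = (\<Prod>p\<in>prime_factors c. real p / (real p - 1))"
  have gt1: "real p > 1" if "p \<in> prime_factors c" for p
    using that prime_gt_1_nat by auto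
  have "P * Q = (\<Prod>p\<in>prime_factors c. 1)"
    unfolding P_def Q_def prod.distrib[symmetric]
    by (intro prod.cong refl) (use gt1 in \<open>fastforce simp: field_simps\<close>)
  moreover have "P > 0"
    unfolding P_def by (intro prod_pos) (use gt1 in fastforce)
  moreover have "real (totient c) = real c * P"
    unfolding P_def by (rule totient_formula2)
  ultimately show ?thesis
    using assms by (simp add: Q_def[symmetric] field_simps mult.commute)
qed

lemma real_div_totient_square_le:
  assumes "c \<ge> 2"
  shows "(real c / real (totient c))^2 \<le> 8 * real (card (prime_factors c))"
proof -
  have "prime_factors c \<noteq> {}"
    using assms by (simp add: prime_factorization_empty_iff)
  then have "(\<Prod>p\<in>prime_factors c. real p / (real p - 1))^2
      \<le> 4 * (2 * real (card (prime_factors c)) - 1)"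
    by (intro prod_prime_ratio_square_le) auto
  then show ?thesis
    using assms by (simp add: real_div_totient_eq_prod)
qed

text \<open>AM-GM in the form \<open>16 r \<le> r\<^sup>2 / 8 + 512\<close>.\<close>

lemma real_div_totient_le_card_prime_factors:
  assumes "c \<ge> 2"
  shows "16 * real c / real (totient c) \<le> real (card (prime_factors c)) + 512"
proof -
  define r where "r = real c / real (totient c)"
  have "16 * r \<le> r^2 / 8 + 512"
    using zero_le_power2[of "r - 64"] by (simp add: power2_eq_square algebra_simps)
  also have "r^2 \<le> 8 * real (card (prime_factors c))"
    unfolding r_def using assms by (rule real_div_totient_square_le)
  finally show ?thesis by (simp add: r_def)
qed

section \<open>The sieve sum E_c\<close>

lemma sum_Pow_minus_one_power_card:
  "finite D \<Longrightarrow> (\<Sum>T\<in>Pow D. (-1::int) ^ card T) = (if D = {} then 1 else 0)"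
proof -
  assume "finite D"
  then have "(\<Sum>T\<in>Pow D. (-1::int) ^ card T) = 0 ^ card D"
    using prod_diff_conv_sum[of D "\<lambda>_. 1::int" "\<lambda>_. 1"] by simp
  then show ?thesis using \<open>finite D\<close> by (simp add: card_gt_0_iff)
qed

lemma sum_Pow_prime_factors_dvd:
  fixes m c :: nat
  assumes "m > 0" "c > 0"
  shows "(\<Sum>S\<in>{S\<in>Pow (prime_factors c). \<Prod>S dvd m}. (-1::int) ^ card S)
       = (if coprime m c then 1 else 0)"
proof -
  have "{S\<in>Pow (prime_factors c). \<Prod>S dvd m} = Pow (prime_factors c \<inter> prime_factors m)"
  proof safe
    fix S p assume S: "S \<subseteq> prime_factors c" "\<Prod>S dvd m" and "p \<in> S"
    then have "finite S" by (meson finite_set_mset finite_subset)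
    then have "p dvd m"
      using dvd_prodI[OF \<open>finite S\<close> \<open>p \<in> S\<close>, of id] S(2) by (simp add: dvd_trans)
    then show "p \<in> prime_factors m"
      using S(1) \<open>p \<in> S\<close> assms by (auto simp: in_prime_factors_iff)
  next
    fix S assume "S \<subseteq> prime_factors c \<inter> prime_factors m"
    then show "\<Prod>S dvd m" by (intro prod_subset_prime_factors_dvd) auto
  qed auto
  then show ?thesis
    using assms sum_Pow_minus_one_power_card[of "prime_factors c \<inter> prime_factors m"]
    by (simp add: coprime_iff_prime_factors_disjoint Int_commute del: Pow_Int_eq)
qed

lemma Ec_eq_card_coprime:
  assumes "c > 0"
  shows "Ec c (real q) = int (card {m\<in>{1..c div q}. coprime m c})"
proof -
  let ?P = "prime_factors c" and ?N = "c div q"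
  have "\<lfloor>real c / (real q * real (\<Prod>S))\<rfloor> = int (card {m\<in>{1..?N}. \<Prod>S dvd m})"
    if "S \<in> Pow ?P" for S
  proof -
    have "\<Prod>S > 0"
      using that by (intro prod_pos) (auto dest: in_prime_factors_imp_prime prime_gt_0_nat)
    have "\<lfloor>real c / (real q * real (\<Prod>S))\<rfloor> = \<lfloor>real c / real (q * \<Prod>S)\<rfloor>"
      by simp
    also have "\<dots> = int (c div (q * \<Prod>S))"
      by (rule floor_divide_of_nat_eq)
    also have "c div (q * \<Prod>S) = ?N div \<Prod>S"
      by (rule div_mult2_eq)
    also have "\<dots> = card {m\<in>{1..?N}. \<Prod>S dvd m}"
      using \<open>\<Prod>S > 0\<close> by (rule card_multiples_atLeastAtMost[symmetric])
    finally show ?thesis .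
  qed
  then have "Ec c (real q) = (\<Sum>S\<in>Pow ?P. \<Sum>m\<in>{m\<in>{1..?N}. \<Prod>S dvd m}. (-1) ^ card S)"
    unfolding Ec_def by (intro sum.cong refl) simp
  also have "\<dots> = (\<Sum>m\<in>{1..?N}. \<Sum>S\<in>{S\<in>Pow ?P. \<Prod>S dvd m}. (-1) ^ card S)"
    by (simp only: sum.inter_filter finite_atLeastAtMost finite_Pow_iff finite_set_mset)
      (rule sum.swap)
  also have "\<dots> = (\<Sum>m\<in>{1..?N}. if coprime m c then 1 else 0)"
    using assms by (intro sum.cong refl sum_Pow_prime_factors_dvd) auto
  finally show ?thesis
    by (simp only: sum.inter_filter[symmetric] finite_atLeastAtMost) simp
qed

lemma powr_mult_half_pred_square_le:
  fixes x t :: real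
  assumes "x \<ge> 1" "t \<ge> 0"
  shows "x powr (2 * real k - 1 - t) * ((x - 1) / 2) ^ 2 \<le> (x ^ k) ^ 2 * (1 - 1 / x) ^ 2 * x * (1 / 4)"
proof -
  have "x powr (2 * real k - 1 - t) \<le> x powr (real (2 * k) - 1)"
    using assms by (intro powr_mono) auto
  also have "\<dots> = x powr real (2 * k) / x"
    using assms by (simp add: powr_diff)
  also have "\<dots> = (x ^ k) ^ 2 / x"
    using assms by (subst powr_realpow) (simp_all add: power_mult mult.commute)
  finally have "x powr (2 * real k - 1 - t) * ((x - 1) / 2) ^ 2 \<le> (x ^ k) ^ 2 / x * ((x - 1) / 2) ^ 2"
    by (rule mult_right_mono) simp
  also have "\<dots> = (x ^ k) ^ 2 * (1 - 1 / x) ^ 2 * x * (1 / 4)"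
    using assms by (simp add: field_simps power2_eq_square)
  finally show ?thesis .
qed

lemma prod_Ec_factors_le:
  assumes "c > 0"
  shows "(\<Prod>q\<in>prime_factors c.
            real q powr (2 * real (multiplicity q c) - 1
                         - 2 / real (totient c) * real_of_int (Ec c (real q)))
            * ((real q - 1) / 2) ^ 2)
         \<le> real (totient c) ^ 2 * real (rad c) * (1 / 4) ^ card (prime_factors c)"
proof -
  let ?P = "prime_factors c"
  have "(\<Prod>q\<in>?P. real q powr (2 * real (multiplicity q c) - 1
                         - 2 / real (totient c) * real_of_int (Ec c (real q)))
            * ((real q - 1) / 2) ^ 2)
        \<le> (\<Prod>q\<in>?P. (real q ^ multiplicity q c) ^ 2 * (1 - 1 / real q) ^ 2 * real q * (1 / 4))"
    using assms
    by (intro prod_mono conjI powr_mult_half_pred_square_le)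
      (auto simp: Ec_eq_card_coprime Suc_le_eq dest: in_prime_factors_imp_prime prime_gt_0_nat)
  also have "\<dots> = (\<Prod>q\<in>?P. real q ^ multiplicity q c) ^ 2 * (\<Prod>q\<in>?P. 1 - 1 / real q) ^ 2
                   * (\<Prod>q\<in>?P. real q) * (1 / 4) ^ card ?P"
    by (simp only: prod.distrib prod_power_distrib prod_constant)
  also have "(\<Prod>q\<in>?P. real q ^ multiplicity q c) = real c"
    using assms by (simp flip: of_nat_prod of_nat_power add: prod_prime_factors)
  also have "(\<Prod>q\<in>?P. 1 - 1 / real q) = real (totient c) / real c"
    using assms by (simp add: totient_formula2)
  also have "(\<Prod>q\<in>?P. real q) = real (rad c)"
    by (simp add: rad_def)
  finally show ?thesis
    using assms by (simp add: power_divide)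
qed

section \<open>The product G_c\<close>

lemma coprime_diff_left_iff:
  fixes a c :: nat
  assumes "a \<le> c"
  shows "coprime (c - a) a \<longleftrightarrow> coprime c a"
  unfolding coprime_iff_gcd_eq_1 by (simp only: gcd_diff1_nat[OF assms])

lemma totatives_reflect:
  assumes "a \<in> totatives c" "c \<ge> 2"
  shows "c - a \<in> totatives c"
proof -
  have "a < c" using assms totatives_less by simp
  moreover have "coprime a c" using assms(1) by (simp add: in_totatives_iff)
  then have "coprime (c - a) c"
    using coprime_diff_left_iff[of a c] coprime_diff_left_iff[of "c - a" c] \<open>a < c\<close>
    by (simp add: coprime_commute)
  ultimately show ?thesis by (simp add: in_totatives_iff)
qed

lemma Gc_index_set:
  "{a. 0 < a \<and> a < c - a \<and> coprime a (c - a)} = {a\<in>totatives c. a < c - a}"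
proof -
  have "coprime a (c - a) \<longleftrightarrow> coprime a c" if "a \<le> c" for a
    using coprime_diff_left_iff[OF that] by (simp add: coprime_commute)
  then show ?thesis by (auto simp: in_totatives_iff)
qed

lemma Gc_square:
  assumes "c \<ge> 3"
  shows "Gc c ^ 2 = rad c ^ totient c * (\<Prod>a\<in>totatives c. rad a) ^ 2"
proof -
  define T A where "T = totatives c" and "A = {a\<in>T. a < c - a}"
  define f where "f a = rad (a * (c - a) * c)" for a
  have T: "0 < a" "a < c" "coprime a c" "c - a \<in> T" if "a \<in> T" for a
    using that assms totatives_reflect[of a c] totatives_less[of a c]
    by (auto simp: T_def in_totatives_iff)
  have f_reflect: "f (c - a) = f a" if "a \<in> T" for a
    using T(2)[OF that] by (simp add: f_def mult.commute)
  have not_mid: "a \<noteq> c - a" if "a \<in> T" for a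
  proof
    assume "a = c - a"
    then have "c = 2 * a" using T(2)[OF that] by simp
    then show False using T(3)[OF that] assms by simp
  qed
  have T_split: "T = A \<union> (\<lambda>a. c - a) ` A"
  proof (intro equalityI subsetI)
    fix a assume "a \<in> T"
    show "a \<in> A \<union> (\<lambda>a. c - a) ` A"
    proof (cases "a < c - a")
      case False
      then have "c - a \<in> A" "a = c - (c - a)"
        using T[OF \<open>a \<in> T\<close>] not_mid[OF \<open>a \<in> T\<close>] by (auto simp: A_def)
      then show ?thesis by blast
    qed (use \<open>a \<in> T\<close> in \<open>simp add: A_def\<close>)
  qed (use T in \<open>auto simp: A_def\<close>)
  have "A \<inter> (\<lambda>a. c - a) ` A = {}" and inj: "inj_on (\<lambda>a. c - a) A"
    using T by (auto simp: A_def inj_on_def)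
  then have "(\<Prod>a\<in>T. f a) = (\<Prod>a\<in>A. f a) * (\<Prod>a\<in>A. f (c - a))"
    unfolding T_split by (simp add: prod.union_disjoint prod.reindex T_def A_def)
  also have "\<dots> = Gc c ^ 2"
    using f_reflect by (simp add: A_def T_def Gc_def Gc_index_set f_def power2_eq_square)
  finally have "Gc c ^ 2 = (\<Prod>a\<in>T. f a)" ..
  also have "\<dots> = (\<Prod>a\<in>T. rad a * rad (c - a) * rad c)"
  proof (intro prod.cong refl)
    fix a assume "a \<in> T"
    have "coprime a (c - a)"
      using T[OF \<open>a \<in> T\<close>] coprime_diff_left_iff[of a c] by (simp add: coprime_commute)
    moreover have "coprime (a * (c - a)) c"
      using T[OF \<open>a \<in> T\<close>] T(3)[of "c - a"] by simp
    ultimately show "f a = rad a * rad (c - a) * rad c"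
      using T[OF \<open>a \<in> T\<close>] by (simp add: f_def rad_mult_coprime)
  qed
  also have "\<dots> = (\<Prod>a\<in>T. rad a) * (\<Prod>a\<in>T. rad (c - a)) * rad c ^ card T"
    by (simp add: prod.distrib)
  also have "(\<Prod>a\<in>T. rad (c - a)) = (\<Prod>a\<in>T. rad a)"
    by (rule prod.reindex_bij_witness[of _ "\<lambda>a. c - a" "\<lambda>a. c - a"])
      (auto dest: T(2) intro: T(4))
  finally show ?thesis
    by (simp add: T_def totient_def power2_eq_square mult_ac)
qed

lemma sum_ln_rad_totatives_ge:
  "(\<Sum>a\<in>totatives c. ln (real (rad a)))
     \<ge> real (totient c) * ln (real (totient c)) - real (totient c) - 8 * real c"
proof -
  let ?T = "totatives c"
  have "fact (totient c) \<le> real (\<Prod>?T)"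
    using fact_card_le_prod[OF finite_totatives zero_not_in_totatives]
    unfolding totient_def by (metis of_nat_fact of_nat_le_iff)
  then have "ln (fact (totient c)) \<le> ln (real (\<Prod>?T))"
    by (rule ln_mono) simp
  also have "\<dots> = (\<Sum>a\<in>?T. ln (real a))"
    unfolding of_nat_prod by (rule ln_prod) (auto simp: in_totatives_iff)
  finally have "real (totient c) * ln (real (totient c)) - real (totient c)
      \<le> (\<Sum>a\<in>?T. ln (real a))"
    using ln_fact_ge[of "totient c"] by linarith
  moreover have "(\<Sum>a\<in>?T. ln (real a) - ln (real (rad a)))
      \<le> (\<Sum>a\<in>{1..c}. ln (real a) - ln (real (rad a)))"
    using totatives_subset[of c] rad_le_self rad_pos
    by (intro sum_mono2) (auto simp: ln_le_cancel_iff)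
  moreover note sum_ln_sub_ln_rad_le[of c]
  ultimately show ?thesis
    by (simp add: sum_subtractf)
qed

lemma Gc_powr_ge:
  assumes "c \<ge> 3"
  shows "real (rad c) * real (totient c)^2 * exp (- 2 - 16 * real c / real (totient c))
           \<le> real (Gc c) powr (2 / real (totient c))"
proof -
  define ph S where "ph = real (totient c)" and "S = (\<Sum>a\<in>totatives c. ln (real (rad a)))"
  have "ph > 0" using assms by (simp add: ph_def)
  have "Gc c > 0" unfolding Gc_def by (intro prod_pos) (simp add: rad_pos)
  have "2 * ln (real (Gc c)) = ln (real (Gc c ^ 2))"
    using \<open>Gc c > 0\<close> by (simp add: ln_realpow)
  also have "\<dots> = ln (real (rad c) ^ totient c * (\<Prod>a\<in>totatives c. real (rad a))^2)"
    using assms by (simp add: Gc_square)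
  also have "\<dots> = ph * ln (real (rad c)) + 2 * S"
    by (simp add: ln_mult ln_realpow ln_prod rad_pos prod_pos ph_def S_def)
  finally have "2 / ph * ln (real (Gc c)) = ln (real (rad c)) + 2 / ph * S"
    using \<open>ph > 0\<close> by (simp add: field_simps)
  moreover have "2 / ph * (ph * ln ph - ph - 8 * real c) \<le> 2 / ph * S"
    using sum_ln_rad_totatives_ge[of c] \<open>ph > 0\<close>
    unfolding ph_def S_def by (intro mult_left_mono) auto
  moreover have "2 / ph * (ph * ln ph - ph - 8 * real c) = 2 * ln ph - 2 - 16 * real c / ph"
    using \<open>ph > 0\<close> by (simp add: field_simps)
  ultimately have "ln (real (rad c) * ph^2 * exp (- 2 - 16 * real c / ph))
      \<le> 2 / ph * ln (real (Gc c))"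
    using \<open>ph > 0\<close> rad_pos[of c] by (simp add: ln_mult ln_realpow)
  then show ?thesis
    using \<open>ph > 0\<close> \<open>Gc c > 0\<close> rad_pos[of c]
    by (simp add: powr_def ph_def flip: ln_le_cancel_iff[of _ "exp _"])
qed

theorem theorem2:
  shows "\<exists>k4::real. k4 > 0 \<and> (\<forall>c::nat. c \<ge> 3 \<longrightarrow>
     real (Gc c) powr (2 / real (totient c)) >
       k4 * (\<Prod>q\<in>prime_factors c.
          real q powr (2 * real (multiplicity q c) - 1
                       - 2 / real (totient c) * real_of_int (Ec c (real q)))
          * ((real q - 1) / 2) ^ 2))"
proof (intro exI[of _ "exp (- 515)"] conjI allI impI)
  fix c :: nat assume "c \<ge> 3"
  define w B where "w = real (card (prime_factors c))"
    and "B = real (totient c) ^ 2 * real (rad c)"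
  have "B > 0" using \<open>c \<ge> 3\<close> rad_pos[of c] by (simp add: B_def)
  have "exp w = exp 1 ^ card (prime_factors c)"
    by (simp add: w_def flip: exp_of_nat_mult)
  also have "\<dots> \<le> 4 ^ card (prime_factors c)"
    using exp_le by (intro power_mono) auto
  finally have quarter: "(1 / 4 :: real) ^ card (prime_factors c) \<le> exp (- w)"
    by (simp add: exp_minus power_one_over inverse_eq_divide divide_left_mono)
  have "(\<Prod>q\<in>prime_factors c. real q powr (2 * real (multiplicity q c) - 1
                - 2 / real (totient c) * real_of_int (Ec c (real q))) * ((real q - 1) / 2) ^ 2)
        \<le> B * (1 / 4) ^ card (prime_factors c)" (is "?R \<le> _")
    unfolding B_def using \<open>c \<ge> 3\<close> by (intro prod_Ec_factors_le) simp
  also have "\<dots> \<le> B * exp (- w)"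
    using quarter \<open>B > 0\<close> by (intro mult_left_mono) auto
  finally have "exp (- 515) * ?R \<le> exp (- 515) * (B * exp (- w))"
    by simp
  also have "\<dots> < B * exp (- 2 - 16 * real c / real (totient c))"
    using real_div_totient_le_card_prime_factors[of c] \<open>c \<ge> 3\<close> \<open>B > 0\<close>
    by (simp add: w_def mult.commute[of B] flip: exp_add)
  also have "\<dots> \<le> real (Gc c) powr (2 / real (totient c))"
    using Gc_powr_ge[OF \<open>c \<ge> 3\<close>] by (simp add: B_def mult_ac)
  finally show "exp (- 515) * ?R < real (Gc c) powr (2 / real (totient c))" .
qed simp

end
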